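(* The set $S_0$ is semi-attracting, i.e. $r(x,y)\le r(y,x)$ for all $x\in S_0$ and $y\in S\setminus S_0$ with $r(x,y)+r(y,x)>0$.
   Context: $S$ is a finite set and $r:S\times S\to[0,\infty)$ with $r(x,x)=0$ are the jump rates of an irreducible continuous-time Markov chain on $S$. $Z_1$ is the continuous-time Markov chain on $S$ with jump rates $b(x,y)=[r(x,y)-r(y,x)]\mathbf 1\{r(x,y)>r(y,x)\}$, and $S_0$ denotes the set of recurrent states (including absorbing states) of $Z_1$. *)

theory Defs
  imports Main "HOL.Real"
begin

definition jump_rel :: "('a \<Rightarrow> 'a \<Rightarrow> real) \<Rightarrow> ('a \<times> 'a) set" where
  "jump_rel q = {(x, y). q x y > 0}"

definition irreducible_rates :: "('a \<Rightarrow> 'a \<Rightarrow> real) \<Rightarrow> bool" where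
  "irreducible_rates q \<longleftrightarrow> (\<forall>x y. (x, y) \<in> (jump_rel q)\<^sup>*)"

definition b_rate :: "('a \<Rightarrow> 'a \<Rightarrow> real) \<Rightarrow> 'a \<Rightarrow> 'a \<Rightarrow> real" where
  "b_rate r x y = (if r x y > r y x then r x y - r y x else 0)"

definition recurrent_states :: "('a \<Rightarrow> 'a \<Rightarrow> real) \<Rightarrow> 'a set" where
  "recurrent_states q = {x. \<forall>y. (x, y) \<in> (jump_rel q)\<^sup>* \<longrightarrow> (y, x) \<in> (jump_rel q)\<^sup>*}"

end

theory Submission
  imports Defs
begin

lemma recurrent_states_rtrancl_closed:
  assumes x: "x \<in> recurrent_states q" and xy: "(x, y) \<in> (jump_rel q)\<^sup>*"
  shows "y \<in> recurrent_states q"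
  unfolding recurrent_states_def
proof (intro CollectI allI impI)
  fix z
  assume "(y, z) \<in> (jump_rel q)\<^sup>*"
  with xy have "(x, z) \<in> (jump_rel q)\<^sup>*" by (rule rtrancl_trans)
  with x have "(z, x) \<in> (jump_rel q)\<^sup>*" by (simp add: recurrent_states_def)
  then show "(z, y) \<in> (jump_rel q)\<^sup>*" using xy by (rule rtrancl_trans)
qed

lemma jump_rel_b_rate_iff: "(x, y) \<in> jump_rel (b_rate r) \<longleftrightarrow> r y x < r x y"
  by (simp add: jump_rel_def b_rate_def)

text \<open>A recurrent class of Z_1 is closed, and Z_1 jumps from x to y exactly when r x y > r y x.\<close>

theorem lemma4p5:
  fixes r :: "'s::finite \<Rightarrow> 's \<Rightarrow> real"
  assumes nonneg: "\<And>x y. r x y \<ge> 0"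
    and diag: "\<And>x. r x x = 0"
    and irred: "irreducible_rates r"
  shows "\<forall>x \<in> recurrent_states (b_rate r). \<forall>y \<in> UNIV - recurrent_states (b_rate r).
           r x y + r y x > 0 \<longrightarrow> r x y \<le> r y x"
proof (intro ballI impI)
  fix x y
  assume x: "x \<in> recurrent_states (b_rate r)"
    and y: "y \<in> UNIV - recurrent_states (b_rate r)"
  show "r x y \<le> r y x"
  proof (rule ccontr)
    assume "\<not> r x y \<le> r y x"
    then have "(x, y) \<in> jump_rel (b_rate r)" by (simp add: jump_rel_b_rate_iff)
    with x have "y \<in> recurrent_states (b_rate r)"
      by (blast intro: recurrent_states_rtrancl_closed)
    with y show False by blast
  qed
qed

end
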